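(* Let $K$ be a field, $A=\{\alpha_1,\dots,\alpha_m\}\subset K$, $B=\{\beta_1,\dots,\beta_n\}\subset K$ finite sets with $|A|=m$, $|B|=n$, $f=\prod_{i}(x-\alpha_i)$, $g=\prod_j(x-\beta_j)$. Let $0\le p\le m$, $0\le q\le n$, set $d:=p+q$ and assume $d\le\min\{m-1,n-1\}$. Then $$\operatorname{Syl}_{p,q}(A,B)=(-1)^{p(m-d)}\binom{d}{p}\operatorname{Sres}_d(f,g).$$
   Context: For finite sets $Y,Z$, $\mathcal{R}(Y,Z):=\prod_{y\in Y,z\in Z}(y-z)$ (equal to $1$ if $Y$ or $Z$ is empty), and $\mathcal{R}(x,Z):=\mathcal{R}(\{x\},Z)$. For $0\le p\le m$, $0\le q\le n$, $$\operatorname{Syl}_{p,q}(A,B)(x):=\sum_{\substack{A'\subset A,\ B'\subset B\\ |A'|=p,\ |B'|=q}}\mathcal{R}(A',B')\,\mathcal{R}(A\setminus A',B\setminus B')\,\frac{\mathcal{R}(x,A')\,\mathcal{R}(x,B')}{\mathcal{R}(A',A\setminus A')\,\mathcal{R}(B',B\setminus B')}.$$ Write $f=\sum_{i=0}^m f_ix^i$, $g=\sum_{i=0}^ng_ix^i$ with $f_i=g_i=0$ outside the natural ranges. For $d\le\min\{m,n\}$ if $m\ne n$, or $d<m=n$, the subresultant $\operatorname{Sres}_d(f,g)(x)$ is the determinant of the $(m+n-2d)\times(m+n-2d)$ matrix with rows $x^jf(x)$ for $j=n-d-1,\dots,0$ followed by rows $x^jg(x)$ for $j=m-d-1,\dots,0$,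 where the row of a polynomial $h$ has as first $m+n-2d-1$ entries the coefficients of $x^{m+n-d-1},\dots,x^{d+1}$ in $h$, and as last entry $h(x)$. *)

theory Defs
  imports "HOL-Computational_Algebra.Polynomial" "Jordan_Normal_Form.Determinant"
begin

definition Rset :: "'a::comm_ring_1 set \<Rightarrow> 'a set \<Rightarrow> 'a" where
  "Rset Y Z = (\<Prod>y\<in>Y. \<Prod>z\<in>Z. y - z)"

definition Rx :: "'a::comm_ring_1 set \<Rightarrow> 'a poly" where
  "Rx Z = (\<Prod>z\<in>Z. [:- z, 1:])"

definition Syl :: "nat \<Rightarrow> nat \<Rightarrow> 'a::field set \<Rightarrow> 'a set \<Rightarrow> 'a poly" where
  "Syl p q A B =
     (\<Sum>A'\<in>{A'. A' \<subseteq> A \<and> card A' = p}. \<Sum>B'\<in>{B'. B' \<subseteq> B \<and> card B' = q}.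
        smult (Rset A' B' * Rset (A - A') (B - B') / (Rset A' (A - A') * Rset B' (B - B')))
              (Rx A' * Rx B'))"

text \<open>The (m+n-2d) x (m+n-2d) matrix of the d-th subresultant (m = degree f, n = degree g):
  rows x^j f(x) for j = n-d-1,...,0, then x^j g(x) for j = m-d-1,...,0; the row of h has
  as first m+n-2d-1 entries the coefficients of x^(m+n-d-1),...,x^(d+1) of h and as last entry h(x).\<close>
definition Sres_mat :: "nat \<Rightarrow> 'a::comm_ring_1 poly \<Rightarrow> 'a poly \<Rightarrow> 'a poly mat" where
  "Sres_mat d f g = (let m = degree f; n = degree g; N = m + n - 2 * d;
      h = (\<lambda>r. if r < n - d then monom 1 (n - d - 1 - r) * f
               else monom 1 (m - d - 1 - (r - (n - d))) * g)
    in mat N N (\<lambda>(r, c). if c < N - 1 then [: coeff (h r) (m + n - d - 1 - c) :] else h r))"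

definition Sres :: "nat \<Rightarrow> 'a::comm_ring_1 poly \<Rightarrow> 'a poly \<Rightarrow> 'a poly" where
  "Sres d f g = det (Sres_mat d f g)"

end

theory Submission
  imports Defs Subresultants.Subresultant
begin

text \<open>Both sides are polynomials of degree at most \<open>d\<close>, so they are determined by their values
  at the more than \<open>d\<close> points of \<open>A\<close> (or of \<open>B\<close>). At \<open>a \<in> A\<close> only the subsets avoiding \<open>a\<close>
  survive, and \<open>Syl\<^sub>p\<^sub>,\<^sub>q(A,B)(a)\<close> is \<open>\<plusminus>R(a,B)\<close> times the leading coefficient of
  \<open>Syl\<^sub>p\<^sub>,\<^sub>q(A-{a},B)\<close>; similarly at points of \<open>B\<close>. Induction on \<open>|A| + |B|\<close> therefore
  reduces \<open>Syl\<^sub>p\<^sub>,\<^sub>q = (-1)\<^bsup>p(m-d)\<^esup> C(d,p) Syl\<^sub>0\<^sub>,\<^sub>d\<close> to the same identity between leading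
  coefficients, which in the square case \<open>|A| = |B| = d\<close> is Pascal's rule. On the determinant
  side, row and column operations show \<open>Sres\<^sub>d((x-a)f, g)(a) = g(a) \<cdot> lc(Sres\<^sub>d(f, g))\<close>, which
  is the same recursion as for \<open>Syl\<^sub>0\<^sub>,\<^sub>d\<close>, so \<open>Sres\<^sub>d(f,g) = Syl\<^sub>0\<^sub>,\<^sub>d(A,B)\<close>.\<close>

lemma poly_eq_if_agree_on:
  fixes P Q :: "'a::idom poly"
  assumes "degree P \<le> d" and "degree Q \<le> d" and "finite S" and "d < card S"
    and "\<And>x. x \<in> S \<Longrightarrow> poly P x = poly Q x"
  shows "P = Q"
proof (rule ccontr)
  assume "P \<noteq> Q"
  then have nz: "P - Q \<noteq> 0" by simp
  have "S \<subseteq> {x. poly (P - Q) x = 0}" using assms(5) by auto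
  then have "card S \<le> card {x. poly (P - Q) x = 0}"
    by (rule card_mono[OF poly_roots_finite[OF nz]])
  also have "\<dots> \<le> degree (P - Q)" by (rule card_poly_roots_bound[OF nz])
  also have "\<dots> \<le> d" using assms(1,2) degree_diff_le by blast
  finally show False using assms(4) by simp
qed

lemma Rset_empty_left [simp]: "Rset {} Z = 1"
  by (simp add: Rset_def)

lemma Rset_empty_right [simp]: "Rset Y {} = 1"
  by (simp add: Rset_def)

lemma Rset_insert_left:
  "finite Y \<Longrightarrow> y \<notin> Y \<Longrightarrow> Rset (insert y Y) Z = (\<Prod>z\<in>Z. y - z) * Rset Y Z"
  by (simp add: Rset_def)

lemma Rset_insert_right:
  "finite Z \<Longrightarrow> z \<notin> Z \<Longrightarrow> Rset Y (insert z Z) = (\<Prod>y\<in>Y. y - z) * Rset Y Z"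
  by (simp add: Rset_def prod.distrib)

lemma prod_diff_flip: "(\<Prod>z\<in>Z. (y::'a::comm_ring_1) - z) = (-1) ^ card Z * (\<Prod>z\<in>Z. z - y)"
proof -
  have "(\<Prod>z\<in>Z. y - z) = (\<Prod>z\<in>Z. (-1) * (z - y))" by simp
  also have "\<dots> = (\<Prod>z\<in>Z. -1) * (\<Prod>z\<in>Z. z - y)" by (rule prod.distrib)
  finally show ?thesis by simp
qed

lemma Rset_swap: "Rset Z Y = (-1) ^ (card Y * card Z) * (Rset Y Z :: 'a::comm_ring_1)"
proof -
  have "Rset Z Y = (\<Prod>y\<in>Y. \<Prod>z\<in>Z. z - y)"
    unfolding Rset_def by (rule prod.swap)
  also have "\<dots> = (\<Prod>y\<in>Y. (-1) ^ card Z * (\<Prod>z\<in>Z. y - z))"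
    by (intro prod.cong refl) (simp add: prod_diff_flip[of _ Z])
  also have "\<dots> = ((-1) ^ card Z) ^ card Y * Rset Y Z"
    by (simp add: prod.distrib Rset_def)
  finally show ?thesis by (simp add: ac_simps flip: power_mult)
qed

lemma Rset_nonzero:
  "finite Y \<Longrightarrow> finite Z \<Longrightarrow> Y \<inter> Z = {} \<Longrightarrow> Rset Y Z \<noteq> (0::'a::field)"
  unfolding Rset_def by auto

lemma poly_Rx: "poly (Rx Z) x = (\<Prod>z\<in>Z. x - z)"
  by (simp add: Rx_def poly_prod)

lemma monic_Rx: "lead_coeff (Rx (Z::'a::idom set)) = 1"
  unfolding Rx_def by (rule monic_prod) simp

lemma Rx_nonzero [simp]: "Rx (Z::'a::idom set) \<noteq> 0"
  using monic_Rx[of Z] by auto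

lemma degree_Rx [simp]: "finite (Z::'a::idom set) \<Longrightarrow> degree (Rx Z) = card Z"
  unfolding Rx_def by (subst degree_prod_eq_sum_degree) auto

lemma coeff_Rx_card [simp]: "finite (Z::'a::idom set) \<Longrightarrow> coeff (Rx Z) (card Z) = 1"
  using monic_Rx[of Z] by simp

lemma Rx_remove: "finite A \<Longrightarrow> a \<in> A \<Longrightarrow> Rx A = [:-a, 1:] * Rx (A - {a})"
  unfolding Rx_def by (rule prod.remove)

definition card_subsets :: "'a set \<Rightarrow> nat \<Rightarrow> 'a set set" where
  "card_subsets A k = {A'. A' \<subseteq> A \<and> card A' = k}"

lemma finite_card_subsets [simp]: "finite A \<Longrightarrow> finite (card_subsets A k)"
  unfolding card_subsets_def by (rule finite_subset[of _ "Pow A"]) auto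

lemma card_subsets_too_big: "finite A \<Longrightarrow> card A < k \<Longrightarrow> card_subsets A k = {}"
  by (auto simp: card_subsets_def dest: card_mono)

lemma card_subsets_card: "finite A \<Longrightarrow> card_subsets A (card A) = {A}"
  by (auto simp: card_subsets_def dest: card_subset_eq)

lemma card_subsets_0: "finite A \<Longrightarrow> card_subsets A 0 = {{}}"
  by (auto simp: card_subsets_def card_eq_0_iff dest: finite_subset)

lemma sum_card_subsets_compl:
  assumes "finite A" and "k \<le> card A"
  shows "(\<Sum>A'\<in>card_subsets A k. h A') = (\<Sum>A''\<in>card_subsets A (card A - k). h (A - A''))"
proof (rule sum.reindex_bij_witness[of _ "\<lambda>A''. A - A''" "\<lambda>A'. A - A'"])
  fix A' assume "A' \<in> card_subsets A k"
  moreover from this have "finite A'" using assms(1) finite_subset by (auto simp: card_subsets_def)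
  ultimately show "A - (A - A') = A'" "A - A' \<in> card_subsets A (card A - k)"
    by (auto simp: card_subsets_def card_Diff_subset)
next
  fix A'' assume "A'' \<in> card_subsets A (card A - k)"
  moreover from this have "finite A''" using assms(1) finite_subset by (auto simp: card_subsets_def)
  ultimately show "A - (A - A'') = A''" "A - A'' \<in> card_subsets A k"
    using assms(2) by (auto simp: card_subsets_def card_Diff_subset)
qed (auto simp: card_subsets_def double_diff)

lemma card_subsets_insert:
  assumes "finite A" and "a \<notin> A" and "1 \<le> k"
  shows "card_subsets (insert a A) k = insert a ` card_subsets A (k - 1) \<union> card_subsets A k"
proof (intro equalityI subsetI)
  fix X assume X: "X \<in> card_subsets (insert a A) k"
  have "finite X" using X assms(1) finite_subset by (auto simp: card_subsets_def)
  show "X \<in> insert a ` card_subsets A (k - 1) \<union> card_subsets A k"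
  proof (cases "a \<in> X")
    case True
    then have "X = insert a (X - {a})" "X - {a} \<in> card_subsets A (k - 1)"
      using X \<open>finite X\<close> assms(2) by (auto simp: card_subsets_def)
    then show ?thesis by blast
  qed (use X in \<open>auto simp: card_subsets_def\<close>)
next
  fix X assume "X \<in> insert a ` card_subsets A (k - 1) \<union> card_subsets A k"
  then show "X \<in> card_subsets (insert a A) k"
  proof
    assume "X \<in> insert a ` card_subsets A (k - 1)"
    then obtain Y where Y: "Y \<in> card_subsets A (k - 1)" "X = insert a Y" by blast
    have "finite Y" "a \<notin> Y" using Y(1) assms(1,2) finite_subset by (auto simp: card_subsets_def)
    then show ?thesis using Y assms(3) by (auto simp: card_subsets_def)
  qed (auto simp: card_subsets_def)
qed

definition Syl_weight :: "'a::field set \<Rightarrow> 'a set \<Rightarrow> 'a set \<Rightarrow> 'a set \<Rightarrow> 'a" where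
  "Syl_weight A B A' B' =
     Rset A' B' * Rset (A - A') (B - B') / (Rset A' (A - A') * Rset B' (B - B'))"

definition Syl_lc :: "nat \<Rightarrow> nat \<Rightarrow> 'a::field set \<Rightarrow> 'a set \<Rightarrow> 'a" where
  "Syl_lc p q A B = (\<Sum>A'\<in>card_subsets A p. \<Sum>B'\<in>card_subsets B q. Syl_weight A B A' B')"

lemma Syl_eq_sum:
  "Syl p q A B = (\<Sum>A'\<in>card_subsets A p. \<Sum>B'\<in>card_subsets B q.
     smult (Syl_weight A B A' B') (Rx A' * Rx B'))"
  unfolding Syl_def card_subsets_def Syl_weight_def ..

lemma poly_Syl: "poly (Syl p q A B) x = (\<Sum>A'\<in>card_subsets A p. \<Sum>B'\<in>card_subsets B q.
    Syl_weight A B A' B' * ((\<Prod>a\<in>A'. x - a) * (\<Prod>b\<in>B'. x - b)))"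
  unfolding Syl_eq_sum by (simp add: poly_sum poly_Rx)

lemma
  assumes "finite A" and "finite B"
  shows coeff_Syl_top: "coeff (Syl p q A B) (p + q) = Syl_lc p q A B"
    and degree_Syl_le: "degree (Syl p q A B) \<le> p + q"
proof -
  have monic: "degree (Rx A' * Rx B') = p + q" "coeff (Rx A' * Rx B') (p + q) = 1"
    if "A' \<in> card_subsets A p" "B' \<in> card_subsets B q" for A' B'
  proof -
    have "finite A'" "finite B'" and [simp]: "p = card A'" "q = card B'"
      using that assms by (auto simp: card_subsets_def intro: finite_subset)
    then show "degree (Rx A' * Rx B') = p + q" "coeff (Rx A' * Rx B') (p + q) = 1"
      using coeff_mult_degree_sum[of "Rx A'" "Rx B'"] by (simp_all add: degree_mult_eq)
  qed
  show "coeff (Syl p q A B) (p + q) = Syl_lc p q A B"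
    unfolding Syl_eq_sum Syl_lc_def coeff_sum coeff_smult by (simp add: monic)
  show "degree (Syl p q A B) \<le> p + q"
    unfolding Syl_eq_sum using assms
    by (intro degree_sum_le) (auto intro: order.trans[OF degree_smult_le] simp: monic)
qed

lemma Syl_lc_0_card: "finite A \<Longrightarrow> finite B \<Longrightarrow> Syl_lc 0 (card B) A B = (1::'a::field)"
  by (simp add: Syl_lc_def card_subsets_0 card_subsets_card Syl_weight_def)

lemma Syl_lc_card_0: "finite A \<Longrightarrow> finite B \<Longrightarrow> Syl_lc (card A) 0 A B = (1::'a::field)"
  by (simp add: Syl_lc_def card_subsets_0 card_subsets_card Syl_weight_def)

lemma poly_Syl_at_left:
  fixes A B :: "'a::field set"
  assumes fA: "finite A" and fB: "finite B" and a: "a \<in> A"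
  shows "poly (Syl p q A B) a = (-1) ^ p * (\<Prod>b\<in>B. a - b) * Syl_lc p q (A - {a}) B"
proof -
  define A1 where "A1 = A - {a}"
  have fA1: "finite A1" using fA by (simp add: A1_def)
  have "poly (Syl p q A B) a = (\<Sum>A'\<in>card_subsets A1 p. \<Sum>B'\<in>card_subsets B q.
      Syl_weight A B A' B' * ((\<Prod>x\<in>A'. a - x) * (\<Prod>b\<in>B'. a - b)))"
    unfolding poly_Syl
  proof (rule sum.mono_neutral_right)
    show "\<forall>A'\<in>card_subsets A p - card_subsets A1 p. (\<Sum>B'\<in>card_subsets B q.
      Syl_weight A B A' B' * ((\<Prod>x\<in>A'. a - x) * (\<Prod>b\<in>B'. a - b))) = 0"
    proof
      fix A' assume "A' \<in> card_subsets A p - card_subsets A1 p"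
      then have "a \<in> A'" "finite A'"
        using fA by (auto simp: card_subsets_def A1_def intro: finite_subset)
      then have "(\<Prod>x\<in>A'. a - x) = 0" by simp
      then show "(\<Sum>B'\<in>card_subsets B q.
          Syl_weight A B A' B' * ((\<Prod>x\<in>A'. a - x) * (\<Prod>b\<in>B'. a - b))) = 0"
        by simp
    qed
  qed (auto simp: fA card_subsets_def A1_def)
  also have "\<dots> = (\<Sum>A'\<in>card_subsets A1 p. \<Sum>B'\<in>card_subsets B q.
      (-1) ^ p * (\<Prod>b\<in>B. a - b) * Syl_weight A1 B A' B')"
  proof (intro sum.cong refl)
    fix A' B' assume A': "A' \<in> card_subsets A1 p" and B': "B' \<in> card_subsets B q"
    have sub: "A' \<subseteq> A1" "B' \<subseteq> B" and cA: "card A' = p"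
      using A' B' by (auto simp: card_subsets_def)
    have fin: "finite A'" "finite B'" "finite (A1 - A')" "finite (B - B')"
      using sub fA1 fB by (auto intro: finite_subset)
    have AA: "A - A' = insert a (A1 - A')" and aA: "a \<notin> A1 - A'" "a \<notin> A'"
      using a sub by (auto simp: A1_def)
    have "(\<Prod>b\<in>B. a - b) = (\<Prod>b\<in>B'. a - b) * (\<Prod>b\<in>B - B'. a - b)"
      using prod.subset_diff[OF sub(2) fB] by (simp add: mult.commute)
    moreover have "(\<Prod>x\<in>A'. a - x) = (-1) ^ p * (\<Prod>x\<in>A'. x - a)"
      using prod_diff_flip[of a A'] cA by simp
    moreover have "(\<Prod>y\<in>A'. y - a) \<noteq> 0" using aA fin by auto
    moreover have "Rset A' (A1 - A') \<noteq> 0" "Rset B' (B - B') \<noteq> 0"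
      using fin by (simp_all add: Rset_nonzero)
    ultimately show "Syl_weight A B A' B' * ((\<Prod>x\<in>A'. a - x) * (\<Prod>b\<in>B'. a - b)) =
        (-1) ^ p * (\<Prod>b\<in>B. a - b) * Syl_weight A1 B A' B'"
      unfolding Syl_weight_def AA Rset_insert_left[OF fin(3) aA(1)] Rset_insert_right[OF fin(3) aA(1)]
      by (simp add: field_simps)
  qed
  also have "\<dots> = (-1) ^ p * (\<Prod>b\<in>B. a - b) * Syl_lc p q A1 B"
    by (simp add: Syl_lc_def sum_distrib_left)
  finally show ?thesis by (simp add: A1_def)
qed

lemma Syl_weight_swap:
  fixes A B :: "'a::field set"
  assumes "finite A" and "finite B" and "A' \<in> card_subsets A p" and "B' \<in> card_subsets B q"
  shows "Syl_weight B A B' A' = (-1) ^ (p * q + (card A - p) * (card B - q)) * Syl_weight A B A' B'"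
proof -
  have "finite A'" "finite B'" "A' \<subseteq> A" "B' \<subseteq> B" "card A' = p" "card B' = q"
    using assms by (auto simp: card_subsets_def intro: finite_subset)
  then have "card A' = p" "card B' = q" "card (A - A') = card A - p" "card (B - B') = card B - q"
    by (simp_all add: card_Diff_subset)
  then show ?thesis
    unfolding Syl_weight_def Rset_swap[of B' A'] Rset_swap[of "B - B'" "A - A'"] power_add
    by (simp add: field_simps)
qed

lemma Syl_swap:
  fixes A B :: "'a::field set"
  assumes "finite A" and "finite B"
  shows "Syl q p B A = smult ((-1) ^ (p * q + (card A - p) * (card B - q))) (Syl p q A B)"
proof -
  have "Syl q p B A = (\<Sum>A'\<in>card_subsets A p. \<Sum>B'\<in>card_subsets B q.
      smult (Syl_weight B A B' A') (Rx B' * Rx A'))"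
    unfolding Syl_eq_sum by (rule sum.swap)
  also have "\<dots> = smult ((-1) ^ (p * q + (card A - p) * (card B - q))) (Syl p q A B)"
    unfolding Syl_eq_sum smult_sum2
    by (intro sum.cong refl) (simp add: Syl_weight_swap[OF assms] mult.commute)
  finally show ?thesis .
qed

lemma Syl_lc_swap:
  fixes A B :: "'a::field set"
  assumes "finite A" and "finite B"
  shows "Syl_lc q p B A = (-1) ^ (p * q + (card A - p) * (card B - q)) * Syl_lc p q A B"
  using arg_cong[OF Syl_swap[OF assms, where p = p and q = q], of "\<lambda>P. coeff P (p + q)"]
    coeff_Syl_top[OF assms, of p q] coeff_Syl_top[OF assms(2,1), of q p]
  by (simp add: add.commute)

lemma poly_Syl_at_right:
  fixes A B :: "'a::field set"
  assumes fA: "finite A" and fB: "finite B" and b: "b \<in> B" and p: "p \<le> card A"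
  shows "poly (Syl p q A B) b =
    (-1) ^ (q + (card A - p)) * (\<Prod>a\<in>A. b - a) * Syl_lc p q A (B - {b})"
proof (cases "q < card B")
  case False
  have cB: "card (B - {b}) = card B - 1" "card B > 0"
    using b fB by (auto simp: card_Diff_singleton card_gt_0_iff)
  have "card_subsets B q \<subseteq> {B}"
  proof
    fix B' assume "B' \<in> card_subsets B q"
    then have "B' \<subseteq> B" "card B \<le> card B'" using False by (auto simp: card_subsets_def)
    then show "B' \<in> {B}" using card_seteq[OF fB] by blast
  qed
  then have "(\<Prod>x\<in>B'. b - x) = 0" if "B' \<in> card_subsets B q" for B'
    using that b fB by auto
  then have "poly (Syl p q A B) b = 0"
    unfolding poly_Syl by simp
  moreover have "Syl_lc p q A (B - {b}) = 0"
    using False cB fB by (simp add: Syl_lc_def card_subsets_too_big)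
  ultimately show ?thesis by simp
next
  case True
  define e where "e = q * p + (card B - q) * (card A - p)"
  define e' where "e' = p * q + (card A - p) * (card (B - {b}) - q)"
  have "poly (Syl p q A B) b = (-1) ^ e * poly (Syl q p B A) b"
    using Syl_swap[OF fB fA, where p = q and q = p] by (simp add: e_def)
  also have "\<dots> = (-1) ^ e * ((-1) ^ q * (\<Prod>a\<in>A. b - a) * Syl_lc q p (B - {b}) A)"
    by (simp add: poly_Syl_at_left[OF fB fA b])
  also have "Syl_lc q p (B - {b}) A = (-1) ^ e' * Syl_lc p q A (B - {b})"
    unfolding e'_def using fA fB by (intro Syl_lc_swap) auto
  also have "(-1) ^ e * ((-1) ^ q * (\<Prod>a\<in>A. b - a) * ((-1) ^ e' * Syl_lc p q A (B - {b}))) =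
      (-1) ^ (e + q + e') * (\<Prod>a\<in>A. b - a) * Syl_lc p q A (B - {b})"
    by (simp add: power_add)
  also have "(-1) ^ (e + q + e') = ((-1) ^ (q + (card A - p)) :: 'a)"
  proof -
    obtain k where k: "card B - q = Suc k" using True by (metis Suc_diff_Suc)
    have "card (B - {b}) - q = k" using k b fB by (simp add: card_Diff_singleton)
    then have "even (e + q + e') = even (q + (card A - p))"
      unfolding e_def e'_def k by (cases "even p"; cases "even q"; cases "even (card A - p)"; simp)
    then show ?thesis by (simp add: minus_one_power_iff)
  qed
  finally show ?thesis .
qed

lemma Syl_weight_compl:
  fixes A B :: "'a::field set"
  assumes "A'' \<subseteq> A" and "B'' \<subseteq> B"
  shows "Syl_weight A B (A - A'') (B - B'') =
    (-1) ^ (card A'' * card (A - A'') + card B'' * card (B - B'')) * Syl_weight A B A'' B''"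
proof -
  have "A - (A - A'') = A''" "B - (B - B'') = B''" using assms by auto
  then show ?thesis
    unfolding Syl_weight_def
    by (simp add: Rset_swap[of A'' "A - A''"] Rset_swap[of B'' "B - B''"] power_add field_simps)
qed

lemma Syl_weight_insert_mem:
  fixes A B :: "'a::field set"
  assumes fA: "finite A" and fB: "finite B" and a: "a \<notin> A" and A': "A' \<subseteq> A" and B': "B' \<subseteq> B"
  shows "Syl_weight (insert a A) B (insert a A') B' * (\<Prod>x\<in>A. a - x) =
    Syl_weight A B A' B' * ((\<Prod>x\<in>A'. a - x) * (\<Prod>b\<in>B'. a - b))"
proof -
  have fin: "finite A'" "finite B'" "finite (A - A')" "finite (B - B')"
    using A' B' fA fB finite_subset by auto
  have aA: "a \<notin> A'" "a \<notin> A - A'" using A' a by auto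
  have "insert a A - insert a A' = A - A'" using a by auto
  moreover have "(\<Prod>x\<in>A. a - x) = (\<Prod>x\<in>A'. a - x) * (\<Prod>x\<in>A - A'. a - x)"
    using prod.subset_diff[OF A' fA] by (simp add: mult.commute)
  moreover have "(\<Prod>x\<in>A - A'. a - x) \<noteq> 0" using aA fin by auto
  moreover have "Rset A' (A - A') \<noteq> 0" "Rset B' (B - B') \<noteq> 0"
    using fin by (simp_all add: Rset_nonzero)
  ultimately show ?thesis
    unfolding Syl_weight_def Rset_insert_left[OF fin(1) aA(1)] by (simp add: field_simps)
qed

lemma Syl_weight_insert_nonmem:
  fixes A B :: "'a::field set"
  assumes fA: "finite A" and fB: "finite B" and a: "a \<notin> A" and A': "A' \<subseteq> A" and B': "B' \<subseteq> B"
  shows "Syl_weight (insert a A) B A' B' * (\<Prod>x\<in>A. a - x) = (-1) ^ card A' *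
    (Syl_weight A B A' B' * ((\<Prod>x\<in>A - A'. a - x) * (\<Prod>b\<in>B - B'. a - b)))"
proof -
  have fin: "finite A'" "finite B'" "finite (A - A')" "finite (B - B')"
    using A' B' fA fB finite_subset by auto
  have aA: "a \<notin> A'" "a \<notin> A - A'" using A' a by auto
  have D: "insert a A - A' = insert a (A - A')" using a A' by auto
  have "(\<Prod>x\<in>A. a - x) = (\<Prod>x\<in>A'. a - x) * (\<Prod>x\<in>A - A'. a - x)"
    using prod.subset_diff[OF A' fA] by (simp add: mult.commute)
  moreover note prod_diff_flip[of a A']
  moreover have "(\<Prod>x\<in>A'. x - a) \<noteq> 0" using aA fin by auto
  moreover have "Rset A' (A - A') \<noteq> 0" "Rset B' (B - B') \<noteq> 0"
    using fin by (simp_all add: Rset_nonzero)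
  ultimately show ?thesis
    unfolding Syl_weight_def D Rset_insert_left[OF fin(3) aA(2)] Rset_insert_right[OF fin(3) aA(2)]
    by (simp add: field_simps)
qed

text \<open>Reindexing by complementary subsets; the signs of the weights cancel because
  \<open>card A + 1 = card B = p + q\<close>.\<close>

lemma poly_Syl_compl:
  fixes A B :: "'a::field set"
  assumes fA: "finite A" and fB: "finite B" and q: "1 \<le> q"
    and cA: "card A + 1 = p + q" and cB: "card B = p + q"
  shows "(\<Sum>A'\<in>card_subsets A p. \<Sum>B'\<in>card_subsets B q.
      (-1) ^ p * (Syl_weight A B A' B' * ((\<Prod>x\<in>A - A'. a - x) * (\<Prod>b\<in>B - B'. a - b)))) =
    poly (Syl (q - 1) p A B) a"
proof -
  have "p \<le> card A" "card A - p = q - 1" "q \<le> card B" "card B - q = p" using cA cB q by auto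
  then show ?thesis
    unfolding sum_card_subsets_compl[OF fA \<open>p \<le> card A\<close>] sum_card_subsets_compl[OF fB \<open>q \<le> card B\<close>]
      \<open>card A - p = q - 1\<close> \<open>card B - q = p\<close> poly_Syl
  proof (intro sum.cong refl)
    fix A'' B'' assume "A'' \<in> card_subsets A (q - 1)" and "B'' \<in> card_subsets B p"
    then have s: "A'' \<subseteq> A" "B'' \<subseteq> B" "card A'' = q - 1" "card B'' = p"
      and "finite A''" "finite B''"
      using fA fB by (auto simp: card_subsets_def intro: finite_subset)
    then have "card (A - A'') = p" "card (B - B'') = q"
      using cA cB q by (simp_all add: card_Diff_subset)
    moreover have "even (p + ((q - 1) * p + p * q))"
      using q by (cases q) (auto simp: algebra_simps)
    ultimately have "(-1::'a) ^ p * (-1) ^ (card A'' * card (A - A'') + card B'' * card (B - B'')) = 1"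
      unfolding s(3,4) by (simp flip: power_add)
    moreover have "A - (A - A'') = A''" "B - (B - B'') = B''" using s by auto
    ultimately show "(-1) ^ p * (Syl_weight A B (A - A'') (B - B'') *
        ((\<Prod>x\<in>A - (A - A''). a - x) * (\<Prod>b\<in>B - (B - B''). a - b))) =
      Syl_weight A B A'' B'' * ((\<Prod>x\<in>A''. a - x) * (\<Prod>b\<in>B''. a - b))"
      unfolding Syl_weight_compl[OF s(1,2)] by (simp add: mult.assoc[symmetric])
  qed
qed

text \<open>Splitting the subsets of \<open>insert a A\<close> according to whether they contain \<open>a\<close>.\<close>

lemma Syl_lc_insert_square:
  fixes A B :: "'a::field set"
  assumes fA: "finite A" and fB: "finite B" and a: "a \<notin> A" and p: "1 \<le> p" and q: "1 \<le> q"
    and cA: "card A + 1 = p + q" and cB: "card B = p + q"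
  shows "Syl_lc p q (insert a A) B * (\<Prod>x\<in>A. a - x) =
    poly (Syl (p - 1) q A B) a + poly (Syl (q - 1) p A B) a"
proof -
  define R where "R = (\<Prod>x\<in>A. a - x)"
  define w where "w A' = (\<Sum>B'\<in>card_subsets B q. Syl_weight (insert a A) B A' B' * R)" for A'
  have inj: "inj_on (insert a) (card_subsets A (p - 1))"
    using a by (auto simp: inj_on_def card_subsets_def)
  have "Syl_lc p q (insert a A) B * R = (\<Sum>A'\<in>card_subsets (insert a A) p. w A')"
    by (simp add: Syl_lc_def w_def sum_distrib_right)
  also have "\<dots> = (\<Sum>A'\<in>insert a ` card_subsets A (p - 1). w A') + (\<Sum>A'\<in>card_subsets A p. w A')"
    unfolding card_subsets_insert[OF fA a p]
    by (rule sum.union_disjoint) (use fA a in \<open>auto simp: card_subsets_def\<close>)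
  also have "(\<Sum>A'\<in>insert a ` card_subsets A (p - 1). w A') =
      (\<Sum>A'\<in>card_subsets A (p - 1). w (insert a A'))"
    by (rule sum.reindex[OF inj, unfolded comp_def])
  also have "\<dots> = poly (Syl (p - 1) q A B) a"
    unfolding poly_Syl w_def R_def
    by (intro sum.cong refl Syl_weight_insert_mem[OF fA fB a]) (auto simp: card_subsets_def)
  also have "(\<Sum>A'\<in>card_subsets A p. w A') = (\<Sum>A'\<in>card_subsets A p. \<Sum>B'\<in>card_subsets B q.
      (-1) ^ p * (Syl_weight A B A' B' * ((\<Prod>x\<in>A - A'. a - x) * (\<Prod>b\<in>B - B'. a - b))))"
    unfolding w_def R_def
    by (intro sum.cong refl, subst Syl_weight_insert_nonmem[OF fA fB a]) (auto simp: card_subsets_def)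
  also have "\<dots> = poly (Syl (q - 1) p A B) a"
    by (rule poly_Syl_compl[OF fA fB q cA cB])
  finally show ?thesis by (simp add: R_def)
qed

lemma Syl_0_eq_Rx:
  fixes A B :: "'a::field set"
  assumes "finite A" and "finite B" and "card A < card B"
  shows "Syl 0 (card A) A B = Rx A"
  using assms(2,3)
proof (induction "card B" arbitrary: B rule: less_induct)
  case less
  show ?case
  proof (rule poly_eq_if_agree_on[where d = "card A" and S = B])
    show "degree (Syl 0 (card A) A B) \<le> card A"
      using degree_Syl_le[OF assms(1) less.prems(1), of 0 "card A"] by simp
    fix b assume b: "b \<in> B"
    have cB: "card (B - {b}) = card B - 1" using b less.prems(1) by (simp add: card_Diff_singleton)
    have "Syl_lc 0 (card A) A (B - {b}) = 1"
    proof (cases "card (B - {b}) = card A")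
      case True
      then show ?thesis using Syl_lc_0_card[OF assms(1), of "B - {b}"] less.prems(1) by simp
    next
      case False
      then have "Syl 0 (card A) A (B - {b}) = Rx A"
        using less.prems cB by (intro less.hyps) auto
      then show ?thesis
        using coeff_Syl_top[OF assms(1), of "B - {b}" 0 "card A"] less.prems(1) assms(1) by simp
    qed
    then show "poly (Syl 0 (card A) A B) b = poly (Rx A) b"
      using poly_Syl_at_right[OF assms(1) less.prems(1) b, of 0 "card A"]
      by (simp add: poly_Rx flip: power_add)
  qed (use assms(1) less.prems in auto)
qed

definition Syl_ratio :: "nat \<Rightarrow> nat \<Rightarrow> nat \<Rightarrow> 'a::comm_ring_1" where
  "Syl_ratio p q m = (-1) ^ (p * (m - (p + q))) * of_nat ((p + q) choose p)"

lemma Syl_reduction_step_right: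
  fixes A B :: "'a::field set"
  assumes fA: "finite A" and fB: "finite B" and "p + q \<le> card A" and dB: "p + q < card B"
    and lc: "\<And>b. b \<in> B \<Longrightarrow>
      Syl_lc p q A (B - {b}) = Syl_ratio p q (card A) * Syl_lc 0 (p + q) A (B - {b})"
  shows "Syl p q A B = smult (Syl_ratio p q (card A)) (Syl 0 (p + q) A B)"
proof (rule poly_eq_if_agree_on[where d = "p + q" and S = B])
  fix b assume b: "b \<in> B"
  have "p \<le> card A" using assms(3) by simp
  then have "(-1) ^ (q + (card A - p)) = ((-1) ^ (p + q + card A) :: 'a)"
    by (cases "even p"; cases "even q"; cases "even (card A)"; simp add: minus_one_power_iff)
  then show "poly (Syl p q A B) b = poly (smult (Syl_ratio p q (card A)) (Syl 0 (p + q) A B)) b"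
    using poly_Syl_at_right[OF fA fB b \<open>p \<le> card A\<close>, of q] poly_Syl_at_right[OF fA fB b, of 0 "p + q"]
    by (simp add: lc[OF b])
qed (use degree_Syl_le[OF fA fB, of p q] degree_Syl_le[OF fA fB, of 0 "p + q"] dB fB in
    \<open>auto intro: order.trans[OF degree_smult_le]\<close>)

lemma Syl_reduction_step_left:
  fixes A B :: "'a::field set"
  assumes fA: "finite A" and fB: "finite B" and dA: "p + q < card A"
    and lc: "\<And>a. a \<in> A \<Longrightarrow>
      Syl_lc p q (A - {a}) B = Syl_ratio p q (card A - 1) * Syl_lc 0 (p + q) (A - {a}) B"
  shows "Syl p q A B = smult (Syl_ratio p q (card A)) (Syl 0 (p + q) A B)"
proof (rule poly_eq_if_agree_on[where d = "p + q" and S = A])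
  fix a assume a: "a \<in> A"
  have "card A - (p + q) = Suc (card A - 1 - (p + q))" using dA by simp
  then have "(-1) ^ p * Syl_ratio p q (card A - 1) = (Syl_ratio p q (card A) :: 'a)"
    by (simp add: Syl_ratio_def power_add)
  then show "poly (Syl p q A B) a = poly (smult (Syl_ratio p q (card A)) (Syl 0 (p + q) A B)) a"
    using poly_Syl_at_left[OF fA fB a, of p q] poly_Syl_at_left[OF fA fB a, of 0 "p + q"]
    by (simp add: lc[OF a])
qed (use degree_Syl_le[OF fA fB, of p q] degree_Syl_le[OF fA fB, of 0 "p + q"] dA fA in
    \<open>auto intro: order.trans[OF degree_smult_le]\<close>)

lemma Syl_lc_square:
  fixes A B :: "'a::field set"
  assumes fA: "finite A" and fB: "finite B" and cA: "card A = p + q" and cB: "card B = p + q"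
    and smaller: "\<And>a p' q'. a \<in> A \<Longrightarrow> p' + q' + 1 = p + q \<Longrightarrow>
      Syl p' q' (A - {a}) B = smult (Syl_ratio p' q' (card A - 1)) (Syl 0 (p' + q') (A - {a}) B)"
  shows "Syl_lc p q A B = Syl_ratio p q (card A) * Syl_lc 0 (p + q) A B"
proof -
  consider "p = 0" | "q = 0" | "1 \<le> p" "1 \<le> q" by linarith
  then show ?thesis
  proof cases
    case 2
    then show ?thesis using Syl_lc_card_0[OF fA fB] Syl_lc_0_card[OF fA fB] cA cB
      by (simp add: Syl_ratio_def)
  next
    case 3
    then obtain a where a: "a \<in> A" using cA by fastforce
    have cA': "card (A - {a}) = p + q - 1" using a fA cA by (simp add: card_Diff_singleton)
    have Syl_Rx: "Syl p' q' (A - {a}) B = smult (of_nat ((p' + q') choose p')) (Rx (A - {a}))"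
      if "p' + q' + 1 = p + q" for p' q'
    proof -
      have "p' + q' = card (A - {a})" "Syl_ratio p' q' (card A - 1) = (of_nat ((p' + q') choose p') :: 'a)"
        using that cA cA' by (simp_all add: Syl_ratio_def)
      then show ?thesis using smaller[OF a that] Syl_0_eq_Rx[of "A - {a}" B] cA' cB 3 fA fB by simp
    qed
    define R where "R = (\<Prod>x\<in>A - {a}. a - x)"
    have "R \<noteq> 0" using fA by (simp add: R_def)
    have "Syl_lc p q A B * R = poly (Syl (p - 1) q (A - {a}) B) a + poly (Syl (q - 1) p (A - {a}) B) a"
      using Syl_lc_insert_square[of "A - {a}" B a p q] fA fB a cA cB 3
      by (simp add: R_def insert_absorb)
    also have "\<dots> = of_nat (((p - 1 + q) choose (p - 1)) + ((q - 1 + p) choose (q - 1))) * R"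
      using 3 by (simp add: Syl_Rx poly_Rx R_def algebra_simps)
    also have "((p - 1 + q) choose (p - 1)) + ((q - 1 + p) choose (q - 1)) = (p + q) choose p"
      using 3 binomial_symmetric[of "q - 1" "q - 1 + p"]
      by (cases p; cases q) (simp_all add: add.commute)
    finally show ?thesis
      using \<open>R \<noteq> 0\<close> Syl_lc_0_card[OF fA fB] cA cB by (simp add: Syl_ratio_def)
  qed (simp add: Syl_ratio_def)
qed

text \<open>The two statements are proved together by induction on \<open>card A + card B\<close>: the
  polynomial identity is obtained by interpolation at the points of \<open>A\<close> or \<open>B\<close> from the
  identity of leading coefficients for smaller sets, and the latter follows from the former
  except in the square case \<open>card A = card B = p + q\<close>.\<close>

lemma Syl_reduction:
  fixes A B :: "'a::field set"
  assumes "finite A" and "finite B" and "p + q \<le> card A" and "p + q \<le> card B"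
  shows "Syl_lc p q A B = Syl_ratio p q (card A) * Syl_lc 0 (p + q) A B \<and>
    (p + q < card A \<or> p + q < card B \<longrightarrow>
      Syl p q A B = smult (Syl_ratio p q (card A)) (Syl 0 (p + q) A B))"
  using assms
proof (induction "card A + card B" arbitrary: A B p q rule: less_induct)
  case less
  note fA = less.prems(1) and fB = less.prems(2)
  have Syl_eq: "Syl p q A B = smult (Syl_ratio p q (card A)) (Syl 0 (p + q) A B)"
    if "p + q < card A \<or> p + q < card B"
  proof (cases "p + q < card B")
    case True
    show ?thesis
    proof (rule Syl_reduction_step_right[OF fA fB less.prems(3) True])
      fix b assume "b \<in> B"
      then show "Syl_lc p q A (B - {b}) = Syl_ratio p q (card A) * Syl_lc 0 (p + q) A (B - {b})"
        using less.hyps[of A "B - {b}" p q] less.prems True fB by (simp add: card_Diff_singleton)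
    qed
  next
    case False
    then have dA: "p + q < card A" using that by simp
    show ?thesis
    proof (rule Syl_reduction_step_left[OF fA fB dA])
      fix a assume "a \<in> A"
      then show "Syl_lc p q (A - {a}) B = Syl_ratio p q (card A - 1) * Syl_lc 0 (p + q) (A - {a}) B"
        using less.hyps[of "A - {a}" B p q] less.prems dA fA by (simp add: card_Diff_singleton)
    qed
  qed
  have "Syl_lc p q A B = Syl_ratio p q (card A) * Syl_lc 0 (p + q) A B"
  proof (cases "p + q < card A \<or> p + q < card B")
    case True
    then show ?thesis
      using arg_cong[OF Syl_eq[OF True], of "\<lambda>P. coeff P (p + q)"]
      by (simp add: coeff_Syl_top[OF fA fB] coeff_Syl_top[OF fA fB, of 0 "p + q", simplified])
  next
    case False
    then have cA: "card A = p + q" and cB: "card B = p + q" using less.prems by auto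
    show ?thesis
    proof (rule Syl_lc_square[OF fA fB cA cB])
      fix a p' q' assume "a \<in> A" and "p' + q' + 1 = p + q"
      moreover from this have cA': "card (A - {a}) = card A - 1"
        using fA by (simp add: card_Diff_singleton)
      ultimately have lt: "card (A - {a}) + card B < card A + card B"
        and le: "p' + q' \<le> card (A - {a})" and ltB: "p' + q' < card B"
        using cA cB by linarith+
      from less.hyps[OF lt _ fB le] fA ltB
      have "Syl p' q' (A - {a}) B = smult (Syl_ratio p' q' (card (A - {a}))) (Syl 0 (p' + q') (A - {a}) B)"
        by simp
      then show "Syl p' q' (A - {a}) B = smult (Syl_ratio p' q' (card A - 1)) (Syl 0 (p' + q') (A - {a}) B)"
        using cA' by simp
    qed
  qed
  with Syl_eq show ?case by blast
qed

definition Sres_row :: "nat \<Rightarrow> 'a::comm_ring_1 poly \<Rightarrow> 'a poly \<Rightarrow> nat \<Rightarrow> 'a poly" where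
  "Sres_row d f g r = (if r < degree g - d then monom 1 (degree g - d - 1 - r) * f
     else monom 1 (degree f - d - 1 - (r - (degree g - d))) * g)"

lemma Sres_mat_Sres_row:
  "Sres_mat d f g = mat (degree f + degree g - 2 * d) (degree f + degree g - 2 * d)
    (\<lambda>(r, c). if c < degree f + degree g - 2 * d - 1
      then [: coeff (Sres_row d f g r) (degree f + degree g - d - 1 - c) :] else Sres_row d f g r)"
  unfolding Sres_mat_def Sres_row_def Let_def ..

lemma coeff_monom_1_mult: "coeff (monom 1 k * (f :: 'a::comm_ring_1 poly)) i = coeff_int f (int i - int k)"
  by (auto simp: coeff_monom_mult coeff_int_def nat_diff_distrib)

lemma coeff_Sres_row:
  "coeff (Sres_row d f g r) i = (if r < degree g - d
     then coeff_int f (int i - int (degree g - d - 1 - r))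
     else coeff_int g (int i - int (degree f - d - 1 - (r - (degree g - d)))))"
  by (simp add: Sres_row_def coeff_monom_1_mult)

lemma Sres_mat_eq_transpose:
  assumes "d \<le> degree f" and "d < degree g"
  shows "Sres_mat d f g = transpose_mat (subresultant_mat d f g)"
proof (rule eq_matI)
  define m n where "m = degree f" "n = degree g"
  define N where "N = (m - d) + (n - d)"
  have N: "m + n - 2 * d = N" using assms by (simp add: m_n_def N_def)
  fix r c assume "r < dim_row (transpose_mat (subresultant_mat d f g))"
    and "c < dim_col (transpose_mat (subresultant_mat d f g))"
  then have r: "r < N" and c: "c < N" by (auto simp: m_n_def N_def)
  have "Sres_mat d f g $$ (r, c) = (if c < N - 1
      then [: coeff (Sres_row d f g r) (m + n - d - 1 - c) :] else Sres_row d f g r)"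
    unfolding Sres_mat_Sres_row using r c by (simp add: N m_n_def[symmetric])
  also have "\<dots> = (if r < n - d then
       if c = N - 1 then monom 1 (n - d - 1 - r) * f else [: coeff_int f (int m - int c + int r) :]
      else if c = N - 1 then monom 1 (m - d - 1 - (r - (n - d))) * g
       else [: coeff_int g (int n - int c + int (r - (n - d))) :])"
  proof (cases "r < n - d")
    case True
    then show ?thesis
      unfolding coeff_Sres_row m_n_def[symmetric] using c
      by (auto simp: N_def Sres_row_def m_n_def[symmetric] intro!: arg_cong[of _ _ "coeff_int f"])
  next
    case False
    then obtain s where "r = (n - d) + s" using le_add_diff_inverse not_less by metis
    then show ?thesis
      unfolding coeff_Sres_row m_n_def[symmetric] using c r
      by (auto simp: N_def Sres_row_def m_n_def[symmetric] intro!: arg_cong[of _ _ "coeff_int g"])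
  qed
  also have "\<dots> = transpose_mat (subresultant_mat d f g) $$ (r, c)"
    using r c subresultant_index_mat[where F = f and G = g and J = d and i = c and j = r]
    by (simp add: m_n_def[symmetric] N_def Let_def)
  finally show "Sres_mat d f g $$ (r, c) = transpose_mat (subresultant_mat d f g) $$ (r, c)" .
qed (use assms in \<open>simp_all add: Sres_mat_Sres_row\<close>)

lemma Sres_eq_subresultant:
  assumes "d \<le> degree f" and "d < degree g"
  shows "Sres d f g = subresultant d f g"
  unfolding Sres_def subresultant_def Sres_mat_eq_transpose[OF assms]
  by (rule det_transpose) (auto simp: subresultant_mat_def Let_def)

lemma degree_Sres_le:
  assumes "d \<le> degree f" and "d < degree g"
  shows "degree (Sres d f g) \<le> d"
proof (rule degree_le, intro allI impI)
  fix k assume "d < k"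
  then show "coeff (Sres d f g) k = 0"
    using assms subresultant_zero_lt[of k f g d] subresultant_zero_ge[of f g d k]
    by (cases "k < degree f + (degree g - d)") (simp_all add: Sres_eq_subresultant)
qed

text \<open>For \<open>d = degree f\<close> the matrix consists of shifts of \<open>f\<close> only, so it does not depend on
  \<open>g\<close> beyond its degree, and \<open>g\<close> may be replaced by a multiple of \<open>f\<close>.\<close>

lemma Sres_degree_left:
  fixes f g :: "'a::idom poly"
  assumes "f \<noteq> 0" and "degree f < degree g"
  shows "Sres (degree f) f g = smult (lead_coeff f ^ (degree g - degree f - 1)) f"
proof -
  define g' where "g' = monom 1 (degree g - degree f) * f"
  have deg: "degree g' = degree g"
    using assms by (simp add: g'_def degree_mult_eq degree_monom_eq)
  have "Sres (degree f) f g = subresultant (degree f) g f"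
    using assms by (simp add: Sres_eq_subresultant subresultant_swap[of _ f])
  also have "\<dots> = subresultant (degree f) g' f"
    by (simp add: subresultant_def subresultant_mat_def deg)
  also have "\<dots> = smult (lead_coeff f ^ (degree g - degree f - 1)) f"
    using assms deg by (subst subresultant_product[of _ "monom 1 (degree g - degree f)"]) (simp_all add: g'_def)
  finally show ?thesis .
qed

definition Sres_coeff_mat :: "nat \<Rightarrow> 'a::comm_ring_1 poly \<Rightarrow> 'a poly \<Rightarrow> 'a mat" where
  "Sres_coeff_mat d f g = mat (degree f + degree g - 2 * d) (degree f + degree g - 2 * d)
     (\<lambda>(r, c). coeff (Sres_row d f g r) (degree f + degree g - d - 1 - c))"

lemma coeff_Sres_eq_det:
  assumes "d \<le> degree f" and "d < degree g"
  shows "coeff (Sres d f g) d = det (Sres_coeff_mat d f g)"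
proof -
  define m n where "m = degree f" "n = degree g"
  define N where "N = (m - d) + (n - d)"
  have N: "m + n - 2 * d = N" using assms by (simp add: m_n_def N_def)
  have "Sres_coeff_mat d f g = transpose_mat (subresultant'_mat d d f g)"
  proof (rule eq_matI)
    fix r c assume "r < dim_row (transpose_mat (subresultant'_mat d d f g))"
      and "c < dim_col (transpose_mat (subresultant'_mat d d f g))"
    then have r: "r < N" and c: "c < N" by (auto simp: subresultant'_mat_def Let_def m_n_def N_def)
    have "Sres_coeff_mat d f g $$ (r, c) = coeff (Sres_row d f g r) (m + n - d - 1 - c)"
      using r c by (simp add: Sres_coeff_mat_def m_n_def[symmetric] N)
    also have "\<dots> = (if r < n - d then
        coeff_int f (if c = N - 1 then int d - int (n - d - 1) + int r else int m - int c + int r)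
      else coeff_int g (if c = N - 1 then int d - int (m - d - 1) + int (r - (n - d))
        else int n - int c + int (r - (n - d))))"
    proof (cases "r < n - d")
      case True
      then show ?thesis
        unfolding coeff_Sres_row m_n_def[symmetric] using c assms
        by (auto simp: N_def m_n_def[symmetric] intro!: arg_cong[of _ _ "coeff_int f"])
    next
      case False
      then obtain s where s: "r = (n - d) + s" using le_add_diff_inverse not_less by metis
      then show ?thesis
        unfolding coeff_Sres_row m_n_def[symmetric] using c r assms
        by (auto simp: N_def m_n_def[symmetric] intro!: arg_cong[of _ _ "coeff_int g"])
    qed
    also have "\<dots> = subresultant'_mat d d f g $$ (c, r)"
      using r c unfolding subresultant'_mat_def Let_def m_n_def[symmetric] N_def[symmetric] by simp
    also have "\<dots> = transpose_mat (subresultant'_mat d d f g) $$ (r, c)"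
      using r c by (simp add: subresultant'_mat_def Let_def m_n_def[symmetric] N_def)
    finally show "Sres_coeff_mat d f g $$ (r, c) = transpose_mat (subresultant'_mat d d f g) $$ (r, c)" .
  qed (use assms in \<open>simp_all add: Sres_coeff_mat_def subresultant'_mat_def Let_def\<close>)
  moreover have "coeff (Sres d f g) d = det (subresultant'_mat d d f g)"
    using assms by (simp add: Sres_eq_subresultant coeff_subresultant)
  ultimately show ?thesis
    by (simp add: det_transpose[of _ N] subresultant'_mat_def Let_def m_n_def N_def)
qed

lemma det_unit_upper_triangular:
  assumes "upper_triangular (M :: 'a::comm_ring_1 mat)" and "M \<in> carrier_mat N N"
    and "\<And>i. i < N \<Longrightarrow> M $$ (i, i) = 1"
  shows "det M = 1"
  unfolding det_upper_triangular[OF assms(1,2)] prod_list_diag_prod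
  using assms(2,3) by (intro prod.neutral) auto

lemma det_horner_columns:
  fixes M :: "'a::comm_ring_1 mat"
  assumes M: "M \<in> carrier_mat N N"
  shows "det (mat N N (\<lambda>(r, c). if c < N - 1 then (\<Sum>i\<le>c. M $$ (r, i) * a ^ (c - i)) else M $$ (r, c)))
    = det M"
proof -
  define U where "U = mat N N (\<lambda>(i, c). if c < N - 1 then (if i \<le> c then a ^ (c - i) else 0)
     else (if i = N - 1 then 1 else 0))"
  have U: "U \<in> carrier_mat N N" by (simp add: U_def)
  have "M * U = mat N N (\<lambda>(r, c). if c < N - 1 then (\<Sum>i\<le>c. M $$ (r, i) * a ^ (c - i)) else M $$ (r, c))"
  proof (rule eq_matI)
    fix r c assume "r < dim_row (mat N N (\<lambda>(r, c). if c < N - 1 then (\<Sum>i\<le>c. M $$ (r, i) * a ^ (c - i))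
      else M $$ (r, c)))" and "c < dim_col (mat N N (\<lambda>(r, c). if c < N - 1
      then (\<Sum>i\<le>c. M $$ (r, i) * a ^ (c - i)) else M $$ (r, c)))"
    then have r: "r < N" and c: "c < N" by auto
    have "(M * U) $$ (r, c) = (\<Sum>i<N. M $$ (r, i) * U $$ (i, c))"
      using M r c by (simp add: scalar_prod_def lessThan_atLeast0 U_def)
    also have "\<dots> = (if c < N - 1 then (\<Sum>i\<le>c. M $$ (r, i) * a ^ (c - i)) else M $$ (r, c))"
    proof (cases "c < N - 1")
      case True
      then have "{..<N} \<inter> {..c} = {..c}" by auto
      then have "(\<Sum>i\<le>c. M $$ (r, i) * a ^ (c - i)) =
          (\<Sum>i<N. if i \<in> {..c} then M $$ (r, i) * a ^ (c - i) else 0)"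
        using sum.inter_restrict[of "{..<N}" "\<lambda>i. M $$ (r, i) * a ^ (c - i)" "{..c}"] by simp
      with True c show ?thesis
        by (simp add: U_def if_distrib[of "\<lambda>x. _ * x"] cong: if_cong)
    next
      case False
      then have "c = N - 1" using c by simp
      with c show ?thesis by (simp add: U_def if_distrib[of "\<lambda>x. _ * x"] sum.delta cong: if_cong)
    qed
    finally show "(M * U) $$ (r, c) = mat N N (\<lambda>(r, c). if c < N - 1
      then (\<Sum>i\<le>c. M $$ (r, i) * a ^ (c - i)) else M $$ (r, c)) $$ (r, c)"
      using r c by simp
  qed (use M in \<open>simp_all add: U_def\<close>)
  moreover have "det U = 1"
    by (rule det_unit_upper_triangular[OF _ U]) (auto simp: U_def upper_triangular_def)
  ultimately show ?thesis using det_mult[OF M U] by simp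
qed

lemma det_subtract_next_rows:
  fixes M :: "'a::comm_ring_1 mat"
  assumes M: "M \<in> carrier_mat N N"
  shows "det (mat N N (\<lambda>(r, c). if k \<le> r \<and> Suc r < N then M $$ (r, c) - a * M $$ (Suc r, c)
    else M $$ (r, c))) = det M"
proof -
  define L where "L = mat N N (\<lambda>(r, i). if i = r then 1 else if i = Suc r \<and> k \<le> r then - a else 0)"
  have L: "L \<in> carrier_mat N N" by (simp add: L_def)
  have "L * M = mat N N (\<lambda>(r, c). if k \<le> r \<and> Suc r < N then M $$ (r, c) - a * M $$ (Suc r, c)
    else M $$ (r, c))"
  proof (rule eq_matI)
    fix r c assume "r < dim_row (mat N N (\<lambda>(r, c). if k \<le> r \<and> Suc r < N
      then M $$ (r, c) - a * M $$ (Suc r, c) else M $$ (r, c)))" and "c < dim_col (mat N N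
      (\<lambda>(r, c). if k \<le> r \<and> Suc r < N then M $$ (r, c) - a * M $$ (Suc r, c) else M $$ (r, c)))"
    then have r: "r < N" and c: "c < N" by auto
    have "(L * M) $$ (r, c) = (\<Sum>i<N. L $$ (r, i) * M $$ (i, c))"
      using M r c by (simp add: scalar_prod_def lessThan_atLeast0 L_def)
    also have "\<dots> = (\<Sum>i<N. (if i = r then M $$ (i, c) else 0) +
        (if i = Suc r then (if k \<le> r then - a * M $$ (i, c) else 0) else 0))"
      using r by (intro sum.cong refl) (auto simp: L_def)
    also have "\<dots> = (if k \<le> r \<and> Suc r < N then M $$ (r, c) - a * M $$ (Suc r, c) else M $$ (r, c))"
      using r by (simp add: sum.distrib sum.delta)
    finally show "(L * M) $$ (r, c) = mat N N (\<lambda>(r, c). if k \<le> r \<and> Suc r < N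
      then M $$ (r, c) - a * M $$ (Suc r, c) else M $$ (r, c)) $$ (r, c)"
      using r c by simp
  qed (use M in \<open>simp_all add: L_def\<close>)
  moreover have "det L = 1"
    by (rule det_unit_upper_triangular[OF _ L]) (auto simp: L_def upper_triangular_def)
  ultimately show ?thesis using det_mult[OF L M] by simp
qed

lemma coeff_synthetic_div_Suc:
  "coeff (synthetic_div p a) k = coeff p (Suc k) + a * coeff (synthetic_div p a) (Suc k)"
  using arg_cong[OF synthetic_div_correct[of p a], of "\<lambda>q. coeff q (Suc k)"] by simp

lemma coeff_synthetic_div_horner:
  fixes p :: "'a::comm_ring_1 poly"
  assumes "degree p \<le> t" and "c < t"
  shows "coeff (synthetic_div p a) (t - 1 - c) = (\<Sum>i\<le>c. coeff p (t - i) * a ^ (c - i))"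
  using assms(2)
proof (induction c)
  case 0
  have "coeff (synthetic_div p a) t = 0"
    using assms(1) 0 by (intro coeff_eq_0) (simp add: degree_synthetic_div)
  then show ?case using coeff_synthetic_div_Suc[of p a "t - 1"] 0 by simp
next
  case (Suc c)
  have "coeff (synthetic_div p a) (t - 1 - Suc c) =
      coeff p (t - Suc c) + a * coeff (synthetic_div p a) (t - 1 - c)"
    using coeff_synthetic_div_Suc[of p a "t - 1 - Suc c"] Suc.prems
    by (simp add: Suc_diff_Suc numeral_2_eq_2)
  also have "\<dots> = (\<Sum>i\<le>Suc c. coeff p (t - i) * a ^ (Suc c - i))"
    using Suc by (simp add: sum_distrib_left Suc_diff_le ac_simps)
  finally show ?case .
qed

lemma synthetic_div_linear_mult: "synthetic_div ([:-a, 1:] * p) a = (p :: 'a::comm_ring_1 poly)"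
proof -
  have "[:-a, 1:] * p + smult a p = pCons 0 p" by (simp add: mult_pCons_left smult_minus_left)
  from synthetic_div_unique[OF this] show ?thesis by simp
qed

lemma
  fixes f g :: "'a::idom poly" and a :: 'a
  assumes "f \<noteq> 0"
  defines "f' \<equiv> [:-a, 1:] * f"
  shows synthetic_div_Sres_row_f_part:
      "r < degree g - d \<Longrightarrow> synthetic_div (Sres_row d f' g r) a = Sres_row d f g r"
    and poly_Sres_row_f_part: "r < degree g - d \<Longrightarrow> poly (Sres_row d f' g r) a = 0"
    and Sres_row_Suc_g_part: "degree g - d \<le> r \<Longrightarrow> Sres_row d f' g (Suc r) = Sres_row d f g r"
    and synthetic_div_Sres_row_g_part: "degree g - d \<le> r \<Longrightarrow> r < degree f + degree g - 2 * d \<Longrightarrow>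
      synthetic_div (Sres_row d f' g r) a = Sres_row d f g r + smult a (synthetic_div (Sres_row d f g r) a)"
    and poly_Sres_row_g_part: "degree g - d \<le> r \<Longrightarrow> r < degree f + degree g - 2 * d \<Longrightarrow>
      poly (Sres_row d f' g r) a = a * poly (Sres_row d f g r) a"
    and Sres_row_last: "d \<le> degree f \<Longrightarrow> d < degree g \<Longrightarrow>
      Sres_row d f' g (degree f + degree g - 2 * d) = g"
proof -
  have deg: "degree f' = Suc (degree f)" unfolding f'_def using assms by (subst degree_mult_eq) auto
  have f_part: "Sres_row d f' g r = [:-a, 1:] * Sres_row d f g r" if "r < degree g - d"
    unfolding Sres_row_def f'_def if_P[OF that] by (rule mult.left_commute)
  then show "r < degree g - d \<Longrightarrow> synthetic_div (Sres_row d f' g r) a = Sres_row d f g r"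
    and "r < degree g - d \<Longrightarrow> poly (Sres_row d f' g r) a = 0"
    by (simp_all only: synthetic_div_linear_mult) simp
  show shift: "Sres_row d f' g (Suc r) = Sres_row d f g r" if "degree g - d \<le> r"
    using that by (simp add: Sres_row_def deg Suc_diff_le)
  have g_part: "Sres_row d f' g r = pCons 0 (Sres_row d f g r)"
    if "degree g - d \<le> r" and "r < degree f + degree g - 2 * d"
  proof -
    have "degree f' - d - 1 - (r - (degree g - d)) = Suc (degree f' - d - 1 - (Suc r - (degree g - d)))"
      using that deg by linarith
    then have "Sres_row d f' g r = pCons 0 (Sres_row d f' g (Suc r))"
      using that by (simp add: Sres_row_def monom_Suc)
    then show ?thesis using shift[OF that(1)] by simp
  qed
  then show "degree g - d \<le> r \<Longrightarrow> r < degree f + degree g - 2 * d \<Longrightarrow>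
      synthetic_div (Sres_row d f' g r) a = Sres_row d f g r + smult a (synthetic_div (Sres_row d f g r) a)"
    and "degree g - d \<le> r \<Longrightarrow> r < degree f + degree g - 2 * d \<Longrightarrow>
      poly (Sres_row d f' g r) a = a * poly (Sres_row d f g r) a"
    by (simp_all add: synthetic_div_correct)
  show "Sres_row d f' g (degree f + degree g - 2 * d) = g" if "d \<le> degree f" and "d < degree g"
  proof -
    have "\<not> degree f + degree g - 2 * d < degree g - d"
      "degree f' - d - 1 - (degree f + degree g - 2 * d - (degree g - d)) = 0"
      using that deg by linarith+
    then show ?thesis by (simp add: Sres_row_def)
  qed
qed

lemma degree_Sres_row_le:
  assumes "d \<le> degree f" and "d < degree g" and "r < degree f + degree g - 2 * d"
  shows "degree (Sres_row d f g r) \<le> degree f + degree g - d - 1"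
proof (cases "r < degree g - d")
  case True
  then show ?thesis
    using degree_mult_le[of "monom 1 (degree g - d - 1 - r)" f]
    by (simp add: Sres_row_def degree_monom_eq)
next
  case False
  then show ?thesis
    using degree_mult_le[of "monom 1 (degree f - d - 1 - (r - (degree g - d)))" g] assms
    by (simp add: Sres_row_def degree_monom_eq)
qed

text \<open>Evaluating the last column at \<open>a\<close> and applying the Horner column operation turns the
  coefficient columns into those of the synthetic quotients by \<open>x - a\<close>.\<close>

lemma poly_Sres_eq_det_synthetic_div:
  fixes f g :: "'a::field poly"
  assumes "d \<le> degree f" and "d < degree g"
  defines "N \<equiv> degree f + degree g - 2 * d" and "t \<equiv> degree f + degree g - d - 1"
  shows "poly (Sres d f g) a = det (mat N N (\<lambda>(r, c). if c < N - 1
    then coeff (synthetic_div (Sres_row d f g r) a) (t - 1 - c) else poly (Sres_row d f g r) a))"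
proof -
  define E where "E = map_mat (\<lambda>p. poly p a) (Sres_mat d f g)"
  have E: "E \<in> carrier_mat N N" by (simp add: E_def Sres_mat_Sres_row N_def)
  have "poly (Sres d f g) a = det E"
    unfolding Sres_def E_def
    by (rule comm_ring_hom.hom_det[symmetric]) (unfold_locales, auto)
  also have "\<dots> = det (mat N N (\<lambda>(r, c). if c < N - 1 then (\<Sum>i\<le>c. E $$ (r, i) * a ^ (c - i))
      else E $$ (r, c)))"
    by (rule det_horner_columns[OF E, symmetric])
  also have "\<dots> = det (mat N N (\<lambda>(r, c). if c < N - 1
      then coeff (synthetic_div (Sres_row d f g r) a) (t - 1 - c) else poly (Sres_row d f g r) a))"
  proof (intro arg_cong[of _ _ det] cong_mat refl, unfold prod.case)
    fix r c assume r: "r < N" and c: "c < N"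
    have E_entry: "E $$ (r, i) =
        (if i < N - 1 then coeff (Sres_row d f g r) (t - i) else poly (Sres_row d f g r) a)"
      if "i < N" for i
      using r that by (simp add: E_def Sres_mat_Sres_row N_def t_def)
    show "(if c < N - 1 then \<Sum>i\<le>c. E $$ (r, i) * a ^ (c - i) else E $$ (r, c)) =
      (if c < N - 1 then coeff (synthetic_div (Sres_row d f g r) a) (t - 1 - c)
       else poly (Sres_row d f g r) a)"
    proof (cases "c < N - 1")
      case True
      then have "(\<Sum>i\<le>c. E $$ (r, i) * a ^ (c - i)) =
          (\<Sum>i\<le>c. coeff (Sres_row d f g r) (t - i) * a ^ (c - i))"
        by (intro sum.cong refl) (simp add: E_entry)
      also have "\<dots> = coeff (synthetic_div (Sres_row d f g r) a) (t - 1 - c)"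
        using degree_Sres_row_le[OF assms(1,2)] r True
        by (intro coeff_synthetic_div_horner[symmetric]) (auto simp: N_def t_def)
      finally show ?thesis using True by simp
    qed (use c in \<open>simp add: E_entry\<close>)
  qed
  finally show ?thesis .
qed

text \<open>After subtracting from each row \<open>x^(j+1) g\<close> the multiple \<open>a\<close> of the next row
  \<open>x^j g\<close>, the last column is \<open>g(a)\<close> times a unit vector and the remaining minor is the
  coefficient matrix of the subresultant of \<open>f\<close> and \<open>g\<close>.\<close>

lemma poly_Sres_linear_factor:
  fixes f g :: "'a::field poly"
  assumes f: "f \<noteq> 0" and dm: "d \<le> degree f" and dn: "d < degree g"
  shows "poly (Sres d ([:-a, 1:] * f) g) a = poly g a * coeff (Sres d f g) d"
proof -
  define F where "F = [:-a, 1:] * f"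
  define N where "N = degree F + degree g - 2 * d"
  define t where "t = degree F + degree g - d - 1"
  define k where "k = degree g - d"
  define X where "X = mat N N (\<lambda>(r, c). if c < N - 1
    then coeff (synthetic_div (Sres_row d F g r) a) (t - 1 - c) else poly (Sres_row d F g r) a)"
  define T where "T = mat N N (\<lambda>(r, c). if k \<le> r \<and> Suc r < N then X $$ (r, c) - a * X $$ (Suc r, c)
    else X $$ (r, c))"
  have deg: "degree F = Suc (degree f)" unfolding F_def using f by (subst degree_mult_eq) auto
  have N: "N - 1 = degree f + degree g - 2 * d" "k < N" "t - 1 = degree f + degree g - d - 1"
    using dm dn deg by (auto simp: N_def k_def t_def)
  note rows = synthetic_div_Sres_row_f_part[OF f] poly_Sres_row_f_part[OF f] Sres_row_Suc_g_part[OF f]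
    synthetic_div_Sres_row_g_part[OF f] poly_Sres_row_g_part[OF f]
  have row_last: "Sres_row d F g (N - 1) = g"
    using Sres_row_last[OF f dm dn, of a] N by (simp add: F_def)
  have last_col: "T $$ (r, N - 1) = (if r = N - 1 then poly g a else 0)" if "r < N" for r
    using that rows[where g = g and d = d and a = a, folded F_def k_def] row_last N by (auto simp: T_def X_def not_less)
  have "mat_delete T (N - 1) (N - 1) = Sres_coeff_mat d f g"
  proof (rule eq_matI)
    fix r c assume "r < dim_row (Sres_coeff_mat d f g)" and "c < dim_col (Sres_coeff_mat d f g)"
    then have "r < N - 1" "c < N - 1" using N by (auto simp: Sres_coeff_mat_def)
    then show "mat_delete T (N - 1) (N - 1) $$ (r, c) = Sres_coeff_mat d f g $$ (r, c)"
      using rows[where g = g and d = d and a = a, folded F_def k_def] N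
      by (auto simp: mat_delete_def T_def X_def Sres_coeff_mat_def not_less)
  qed (use N in \<open>simp_all add: Sres_coeff_mat_def mat_delete_def T_def\<close>)
  moreover have "det T = poly g a * det (mat_delete T (N - 1) (N - 1))"
  proof -
    have "det T = (\<Sum>i<N. T $$ (i, N - 1) * cofactor T i (N - 1))"
      using N by (intro laplace_expansion_column) (auto simp: T_def)
    also have "\<dots> = (\<Sum>i<N. if i = N - 1 then poly g a * cofactor T i (N - 1) else 0)"
      using last_col by (intro sum.cong refl) simp
    also have "\<dots> = poly g a * cofactor T (N - 1) (N - 1)"
      using \<open>k < N\<close> by (simp add: sum.delta)
    finally show ?thesis by (simp add: cofactor_def)
  qed
  moreover have "poly (Sres d F g) a = det X"
    unfolding X_def N_def t_def by (rule poly_Sres_eq_det_synthetic_div) (use dm dn deg in auto)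
  moreover have "det X = det T"
    unfolding T_def by (rule det_subtract_next_rows[symmetric]) (simp add: X_def)
  ultimately show ?thesis using coeff_Sres_eq_det[OF dm dn] by (simp add: F_def)
qed

lemma Sres_Rx_eq_Syl_0:
  fixes A B :: "'a::field set"
  assumes fA: "finite A" and fB: "finite B" and "d \<le> card A" and dB: "d < card B"
  shows "Sres d (Rx A) (Rx B) = Syl 0 d A B"
  using fA assms(3)
proof (induction "card A" arbitrary: A rule: less_induct)
  case less
  note fA = less.prems(1)
  show ?case
  proof (cases "d = card A")
    case True
    then show ?thesis
      using Sres_degree_left[of "Rx A" "Rx B"] Syl_0_eq_Rx[OF fA fB] fA fB dB by (simp add: monic_Rx)
  next
    case False
    then have dA: "d < card A" using less.prems(2) by simp
    show ?thesis
    proof (rule poly_eq_if_agree_on[where d = d and S = A])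
      fix a assume a: "a \<in> A"
      have "card (A - {a}) < card A" "d \<le> card (A - {a})"
        using a fA dA by (simp_all add: card_Diff_singleton)
      then have "coeff (Sres d (Rx (A - {a})) (Rx B)) d = Syl_lc 0 d (A - {a}) B"
        using less.hyps[of "A - {a}"] coeff_Syl_top[of "A - {a}" B 0 d] fA fB by simp
      moreover have "poly (Sres d (Rx A) (Rx B)) a = poly (Rx B) a * coeff (Sres d (Rx (A - {a})) (Rx B)) d"
        unfolding Rx_remove[OF fA a]
        by (rule poly_Sres_linear_factor) (use \<open>d \<le> card (A - {a})\<close> fA fB dB in auto)
      ultimately show "poly (Sres d (Rx A) (Rx B)) a = poly (Syl 0 d A B) a"
        by (simp add: poly_Syl_at_left[OF fA fB a] poly_Rx)
    qed (use fA fB dA dB degree_Syl_le[OF fA fB, of 0 d] in \<open>auto intro: degree_Sres_le\<close>)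
  qed
qed

theorem corollary3p4:
  fixes A B :: "'a::field set" and m n p q d :: nat and f g :: "'a poly"
  assumes "finite A" and "finite B" and "card A = m" and "card B = n"
    and "f = (\<Prod>a\<in>A. [:- a, 1:])" and "g = (\<Prod>b\<in>B. [:- b, 1:])"
    and "p \<le> m" and "q \<le> n" and "d = p + q"
    and "d + 1 \<le> min m n"
  shows "Syl p q A B = smult ((-1) ^ (p * (m - d)) * of_nat (d choose p)) (Sres d f g)"
proof -
  have dA: "d < card A" and dB: "d < card B" using assms(3,4,10) by auto
  have "Syl p q A B = smult (Syl_ratio p q (card A)) (Syl 0 d A B)"
    using Syl_reduction[OF assms(1,2), of p q] dA dB assms(9) by simp
  also have "Syl 0 d A B = Sres d f g"
    using Sres_Rx_eq_Syl_0[OF assms(1,2) less_imp_le[OF dA] dB] assms(5,6) by (simp add: Rx_def)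
  finally show ?thesis using assms(3,9) by (simp add: Syl_ratio_def)
qed

end
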